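(* Let $k$ be a positive even integer. There exist positive constants $N_0,C_k,A_k$ such that for all $N>N_0$ and all $t=e^z$ on the minor arc $C''_N$ we have \[ |F_k(t)|<C_k\,N^{A_k}. \]
   Context: Let $M_0(t,q)=\prod_{m\geq1}\prod_{j=0}^{m-1}\frac{1}{1-q^{2j+1-m}t^m}$, let $\partial=q\frac{d}{dq}$, and define $M_k(t)=\partial^k M_0(t,q)\big|_{q=1}$. Let $M(t)=\prod_{m\geq1}(1-t^m)^{-m}$ be MacMahon's function, and define $F_k(t)$ by $M_k(t)=F_k(t)\cdot M(t)$ (for $|t|<1$). For $N>0$, $C_N$ is the circle $|t|=e^{-1/N}$; writing $t=e^z$ with $\operatorname{Re}z=-1/N$ and $\operatorname{Im}z\in(-\pi,\pi]$, the major arc $C'_N$ consists of the points with $|\operatorname{Im}z|<1/N$, and the minor arc $C''_N$ is $C_N\setminus C'_N$. *)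

theory Defs
  imports "HOL-Analysis.Analysis"
begin

definition M0 :: "complex \<Rightarrow> complex \<Rightarrow> complex" where
  "M0 t q = (\<Prod>n. (let m = Suc n in
      \<Prod>j<m. inverse (1 - q powi (2 * int j + 1 - int m) * t ^ m)))"

definition qdq :: "(complex \<Rightarrow> complex) \<Rightarrow> complex \<Rightarrow> complex" where
  "qdq f = (\<lambda>q. q * deriv f q)"

definition Mk :: "nat \<Rightarrow> complex \<Rightarrow> complex" where
  "Mk k t = (qdq ^^ k) (M0 t) 1"

definition MacMahon :: "complex \<Rightarrow> complex" where
  "MacMahon t = (\<Prod>n. inverse ((1 - t ^ Suc n) ^ Suc n))"

definition Fk :: "nat \<Rightarrow> complex \<Rightarrow> complex" where
  "Fk k t = Mk k t / MacMahon t"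

text \<open>Minor arc C''_N, parametrised by z with t = exp z.\<close>
definition minor_arc_z :: "real \<Rightarrow> complex set" where
  "minor_arc_z N = {z. Re z = - 1 / N \<and> - pi < Im z \<and> Im z \<le> pi \<and> \<not> (\<bar>Im z\<bar> < 1 / N)}"

end

theory Submission
  imports Defs "HOL-Complex_Analysis.Complex_Analysis"
begin

text \<open>Substituting q = e^w turns (q d/dq)^k at q = 1 into (d/dw)^k at w = 0, and
  M_0(t, e^w) / M(t) = prod_{m>=1} prod_{j<m} (1 - t^m) / (1 - e^((2j+1-m) w) t^m).
  Since |2j+1-m| <= m, for |t| <= e^-a and |w| <= a/2 each factor is within
  (4/a) m |w| e^(-am/2) of 1. On the disc |w| <= rho = a^4/256 the m-th block of m factors
  is therefore within 2a e^(-am/4) of 1, and these deviations sum to at most 16 whatever a is.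
  So the product converges uniformly to a holomorphic function of w bounded by e^16, and
  Cauchy's inequality on that disc gives |F_k(t)| <= k! e^16 rho^-k, which is O(N^(4k))
  for a = 1/N.\<close>

section \<open>Elementary estimates\<close>

lemma exp_powi: "exp (w::complex) powi s = exp (of_int s * w)"
proof (cases "s \<ge> 0")
  case True
  then obtain n where "s = int n" by (metis nonneg_int_cases)
  thus ?thesis by (simp add: exp_of_nat_mult power_int_def)
next
  case False
  then obtain n where "s = - int n" by (metis neg_int_cases not_le)
  thus ?thesis by (simp add: exp_of_nat_mult power_int_def exp_minus power_inverse)
qed

lemma norm_exp_minus_one_le:
  fixes z :: complex
  shows "norm (exp z - 1) \<le> norm z * exp (norm z)"
proof -
  have "norm (exp z - exp 0) \<le> exp (norm z) * norm (z - 0)"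
  proof (rule field_differentiable_bound[of "cball 0 (norm z)" exp exp])
    show "(exp has_field_derivative exp w) (at w within cball 0 (norm z))" for w :: complex
      by (rule DERIV_exp[THEN has_field_derivative_at_within])
    show "norm (exp w) \<le> exp (norm z)" if "w \<in> cball 0 (norm z)" for w :: complex
      using norm_exp[of w] that by (simp add: order_trans)
  qed auto
  thus ?thesis by (simp add: mult.commute)
qed

lemma one_minus_exp_neg_ge:
  fixes x :: real
  assumes "0 \<le> x" "x \<le> 1"
  shows "x / 2 \<le> 1 - exp (- x)"
proof -
  have "exp (- x) \<le> 1 / (1 + x)"
    using exp_ge_add_one_self[of x] assms by (simp add: exp_minus field_simps)
  also have "\<dots> \<le> 1 - x / 2"
    using assms mult_right_le_one_le[of x x] by (simp add: field_simps)
  finally show ?thesis by simp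
qed

lemma exp_minus_one_le_mult_exp:
  fixes x :: real
  assumes "0 \<le> x"
  shows "exp x - 1 \<le> x * exp x"
proof -
  have "(1 - x) * exp x \<le> exp (- x) * exp x"
    using exp_ge_add_one_self[of "- x"] by (intro mult_right_mono) auto
  thus ?thesis by (simp add: exp_minus algebra_simps)
qed

lemma linear_mult_exp_le:
  fixes a x :: real
  assumes "0 < a"
  shows "x * exp (- a * x) \<le> 2 / a * exp (- a * x / 2)"
proof -
  have "a * x / 2 \<le> exp (a * x / 2)"
    using exp_ge_add_one_self[of "a * x / 2"] by linarith
  hence "x * exp (- a * x) \<le> 2 / a * exp (a * x / 2) * exp (- a * x)"
    using assms by (intro mult_right_mono) (auto simp: field_simps)
  also have "\<dots> = 2 / a * exp (- a * x / 2)"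
    by (simp add: mult.assoc exp_add[symmetric])
  finally show ?thesis .
qed

lemma square_mult_exp_le:
  fixes a x :: real
  assumes "0 < a" "0 \<le> x"
  shows "x\<^sup>2 * exp (- a * x / 2) \<le> 64 / a\<^sup>2 * exp (- a * x / 4)"
proof -
  have "a * x / 8 \<le> exp (a * x / 8)"
    using exp_ge_add_one_self[of "a * x / 8"] by linarith
  hence "(a * x / 8)\<^sup>2 \<le> exp (a * x / 8) ^ 2"
    using assms by (intro power_mono) auto
  hence "x\<^sup>2 * exp (- a * x / 2) \<le> 64 / a\<^sup>2 * exp (a * x / 8) ^ 2 * exp (- a * x / 2)"
    using assms by (intro mult_right_mono) (auto simp: field_simps power2_eq_square)
  also have "\<dots> = 64 / a\<^sup>2 * exp (- a * x / 4)"
    by (simp add: power2_eq_square mult.assoc exp_add[symmetric])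
  finally show ?thesis .
qed

lemma quartic_radius_le:
  fixes a :: real
  assumes "0 < a" "a \<le> 1"
  shows "a ^ 4 / 256 \<le> a / 2"
proof -
  have "a ^ 4 \<le> a"
    using assms power_le_one[of a 3] mult_left_le[of "a ^ 3" a] by (simp add: power_Suc[symmetric])
  thus ?thesis
    using assms by simp
qed

lemma norm_power_le_exp_mult:
  fixes t :: "'a :: real_normed_div_algebra"
  assumes "norm t \<le> exp (- a)"
  shows "norm (t ^ m) \<le> exp (- a * m)"
proof -
  have "norm (t ^ m) \<le> exp (- a) ^ m"
    unfolding norm_power using assms by (intro power_mono) auto
  thus ?thesis
    by (simp add: exp_of_nat_mult[symmetric] mult.commute)
qed

lemma norm_prod_minus_one_le:
  fixes f :: "nat \<Rightarrow> 'a :: {real_normed_div_algebra, comm_ring_1}"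
  shows "norm ((\<Prod>n\<in>A. f n) - 1) \<le> exp (\<Sum>n\<in>A. norm (f n - 1)) - 1"
  using norm_prod_minus1_le_prod_minus1[of "\<lambda>n. f n - 1" A]
    prod_le_exp_sum[of A "\<lambda>n. norm (f n - 1)"] by simp

section \<open>Holomorphic infinite products\<close>

lemma Weierstrass_m_test_prodinf:
  fixes f :: "nat \<Rightarrow> 'a :: topological_space \<Rightarrow> 'b :: {real_normed_field, banach}"
  assumes cont: "\<And>n. continuous_on A (f n)" and A: "compact A"
    and bound: "\<And>n x. x \<in> A \<Longrightarrow> norm (f n x - 1) \<le> \<gamma> n"
    and \<gamma>: "summable \<gamma>"
  shows "uniform_limit A (\<lambda>N x. \<Prod>n<N. f n x) (\<lambda>x. \<Prod>n. f n x) sequentially"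
proof -
  have "uniformly_convergent_on A (\<lambda>N x. \<Prod>n<N. f n x)"
  proof (rule uniformly_convergent_on_prod'[OF cont A])
    show "uniformly_convergent_on A (\<lambda>N x. \<Sum>n<N. norm (f n x - 1))"
      unfolding uniformly_convergent_on_def
      using Weierstrass_m_test[of A "\<lambda>n x. norm (f n x - 1)" \<gamma>] bound \<gamma> by auto
  qed
  then obtain l where ul: "uniform_limit A (\<lambda>N x. \<Prod>n<N. f n x) l sequentially"
    unfolding uniformly_convergent_on_def by blast
  have "l x = (\<Prod>n. f n x)" if x: "x \<in> A" for x
  proof -
    have "summable (\<lambda>n. norm (f n x - 1))"
      by (rule summable_comparison_test'[OF \<gamma>]) (use bound[OF x] in simp)
    hence "convergent_prod (\<lambda>n. f n x)"
      by (intro abs_convergent_prod_imp_convergent_prod summable_imp_abs_convergent_prod)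
    hence "(\<lambda>N. \<Prod>n\<le>N. f n x) \<longlonglongrightarrow> (\<Prod>n. f n x)"
      by (rule convergent_prod_LIMSEQ)
    hence "(\<lambda>N. \<Prod>n<N. f n x) \<longlonglongrightarrow> (\<Prod>n. f n x)"
      using LIMSEQ_lessThan_iff_atMost[of "\<lambda>A. \<Prod>n\<in>A. f n x"] by simp
    thus ?thesis
      by (rule LIMSEQ_unique[OF tendsto_uniform_limitI[OF ul x]])
  qed
  hence "uniform_limit A (\<lambda>N x. \<Prod>n<N. f n x) l sequentially
           \<longleftrightarrow> uniform_limit A (\<lambda>N x. \<Prod>n<N. f n x) (\<lambda>x. \<Prod>n. f n x) sequentially"
    by (intro uniform_limit_cong') simp_all
  thus ?thesis
    using ul by blast
qed

lemma
  fixes f :: "nat \<Rightarrow> complex \<Rightarrow> complex" and \<gamma> :: "nat \<Rightarrow> real"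
  assumes cont: "\<And>n. continuous_on (cball c r) (f n)"
    and hol: "\<And>n. f n holomorphic_on ball c r"
    and bound: "\<And>n w. w \<in> cball c r \<Longrightarrow> norm (f n w - 1) \<le> \<gamma> n"
    and \<gamma>: "summable \<gamma>"
  shows continuous_on_prodinf: "continuous_on (cball c r) (\<lambda>w. \<Prod>n. f n w)"
    and holomorphic_on_prodinf: "(\<lambda>w. \<Prod>n. f n w) holomorphic_on ball c r"
    and norm_prodinf_le_exp_suminf: "\<And>w. w \<in> cball c r \<Longrightarrow> norm (\<Prod>n. f n w) \<le> exp (suminf \<gamma>)"
proof -
  have ul: "uniform_limit (cball c r) (\<lambda>N w. \<Prod>n<N. f n w) (\<lambda>w. \<Prod>n. f n w) sequentially"
    using cont compact_cball bound \<gamma> by (rule Weierstrass_m_test_prodinf)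
  have "\<forall>\<^sub>F N in sequentially. continuous_on (cball c r) (\<lambda>w. \<Prod>n<N. f n w)
          \<and> (\<lambda>w. \<Prod>n<N. f n w) holomorphic_on ball c r"
    using cont hol by (intro always_eventually allI conjI continuous_on_prod holomorphic_on_prod) auto
  then show "continuous_on (cball c r) (\<lambda>w. \<Prod>n. f n w)"
    and "(\<lambda>w. \<Prod>n. f n w) holomorphic_on ball c r"
    by (auto elim!: holomorphic_uniform_limit[OF _ ul])
  fix w assume w: "w \<in> cball c r"
  have "norm (\<Prod>n<N. f n w) \<le> exp (suminf \<gamma>)" for N
  proof -
    have "norm ((\<Prod>n<N. f n w) - 1) \<le> exp (\<Sum>n<N. norm (f n w - 1)) - 1"
      by (rule norm_prod_minus_one_le)
    also have "(\<Sum>n<N. norm (f n w - 1)) \<le> (\<Sum>n<N. \<gamma> n)"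
      by (intro sum_mono bound[OF w])
    also have "\<dots> \<le> suminf \<gamma>"
      using order_trans[OF norm_ge_zero bound[OF w]] by (intro sum_le_suminf[OF \<gamma>]) auto
    finally show ?thesis
      using norm_triangle_ineq2[of "\<Prod>n<N. f n w" 1] by simp
  qed
  thus "norm (\<Prod>n. f n w) \<le> exp (suminf \<gamma>)"
    using tendsto_norm[OF tendsto_uniform_limitI[OF ul w]] by (intro LIMSEQ_le_const2) auto
qed

section \<open>The operator q d/dq in the variable w = log q\<close>

lemma holomorphic_on_qdq_funpow:
  assumes "f holomorphic_on S" "open S"
  shows "(qdq ^^ k) f holomorphic_on S"
  by (induction k) (use assms in \<open>auto simp: qdq_def intro!: holomorphic_intros\<close>)

lemma higher_deriv_comp_exp_eq_qdq_funpow: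
  assumes hol: "f holomorphic_on S" and S: "open S" and U: "open U" and sub: "exp ` U \<subseteq> S"
    and w: "w \<in> U"
  shows "(deriv ^^ k) (\<lambda>w. f (exp w)) w = (qdq ^^ k) f (exp w)"
  using w
proof (induction k arbitrary: w)
  case (Suc k)
  have "\<forall>\<^sub>F v in nhds w. (deriv ^^ k) (\<lambda>w. f (exp w)) v = ((qdq ^^ k) f \<circ> exp) v"
    using eventually_nhds_in_open[OF U Suc.prems] by eventually_elim (simp add: Suc.IH)
  hence "(deriv ^^ Suc k) (\<lambda>w. f (exp w)) w = deriv ((qdq ^^ k) f \<circ> exp) w"
    by (simp add: deriv_cong_ev)
  also have "\<dots> = deriv ((qdq ^^ k) f) (exp w) * deriv exp w"
  proof (rule deriv_chain)
    show "(qdq ^^ k) f field_differentiable at (exp w)"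
      using holomorphic_on_imp_differentiable_at[OF holomorphic_on_qdq_funpow[OF hol S] S] sub Suc.prems
      by auto
  qed (rule field_differentiable_within_exp)
  also have "\<dots> = (qdq ^^ Suc k) f (exp w)"
    by (simp add: qdq_def DERIV_imp_deriv[OF DERIV_exp])
  finally show ?case .
qed simp

lemma qdq_funpow_at_one:
  fixes f g :: "complex \<Rightarrow> complex"
  assumes g: "g holomorphic_on ball 0 r" and r: "0 < r"
    and fg: "\<And>w. w \<in> ball 0 r \<Longrightarrow> f (exp w) = g w"
  shows "(qdq ^^ k) f 1 = (deriv ^^ k) g 0"
proof -
  define S where "S = ball 1 1 \<inter> Ln -` ball 0 r"
  have "q \<notin> \<real>\<^sub>\<le>\<^sub>0" if "q \<in> ball 1 1" for q :: complex
    using that abs_Re_le_cmod[of "1 - q"] by (auto simp: dist_norm complex_nonpos_Reals_iff)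
  hence Ln: "Ln holomorphic_on S" "continuous_on (ball 1 1) Ln"
    by (auto simp: S_def intro!: holomorphic_on_Ln continuous_on_Ln)
  have S: "open S"
    unfolding S_def using Ln(2) by (rule continuous_open_preimage) auto
  have "(g \<circ> Ln) holomorphic_on S"
    using Ln(1) g by (rule holomorphic_on_compose_gen) (auto simp: S_def)
  moreover have "(g \<circ> Ln) q = f q" if "q \<in> S" for q
  proof -
    have "q \<noteq> 0"
      using that by (auto simp: S_def)
    thus ?thesis
      using fg[of "Ln q"] that by (auto simp: S_def)
  qed
  ultimately have f: "f holomorphic_on S"
    by (rule holomorphic_transform)
  define U where "U = ball 0 r \<inter> exp -` S"
  have U: "open U"
    unfolding U_def by (intro continuous_open_preimage continuous_intros S open_ball)
  have "0 \<in> U"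
    using r by (simp add: U_def S_def)
  moreover have "exp ` U \<subseteq> S"
    by (auto simp: U_def)
  ultimately have "(qdq ^^ k) f 1 = (deriv ^^ k) (\<lambda>w. f (exp w)) 0"
    using higher_deriv_comp_exp_eq_qdq_funpow[OF f S U, of 0 k] by simp
  also have "\<dots> = (deriv ^^ k) g 0"
    using eventually_nhds_in_open[of "ball 0 r" 0] r fg
    by (intro higher_deriv_cong_ev) (auto elim!: eventually_mono)
  finally show ?thesis .
qed

section \<open>The quotient M_0(t, e^w) / M(t)\<close>

lemma norm_one_minus_exp_mult_power_ge:
  fixes t u :: complex and a :: real
  assumes a: "0 < a" "a \<le> 2" and t: "norm t \<le> exp (- a)" and u: "norm u \<le> a * m / 2"
    and m: "1 \<le> m"
  shows "a / 4 \<le> norm (1 - exp u * t ^ m)"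
proof -
  have "norm (exp u * t ^ m) \<le> exp (a * m / 2) * exp (- a * m)"
    unfolding norm_mult using norm_exp[of u] u norm_power_le_exp_mult[OF t, of m]
    by (intro mult_mono) (auto intro: order_trans)
  also have "\<dots> = exp (- (a * m / 2))"
    by (simp add: exp_add[symmetric])
  also have "\<dots> \<le> exp (- (a / 2))"
    using a m by (simp add: mult_le_cancel_left1)
  finally have "a / 4 \<le> 1 - norm (exp u * t ^ m)"
    using one_minus_exp_neg_ge[of "a / 2"] a by simp
  also have "\<dots> \<le> norm (1 - exp u * t ^ m)"
    using norm_triangle_ineq2[of 1 "exp u * t ^ m"] by simp
  finally show ?thesis .
qed

lemma norm_quotient_minus_one_le:
  fixes t u :: complex and a :: real
  assumes a: "0 < a" "a \<le> 2" and t: "norm t \<le> exp (- a)" and u: "norm u \<le> a * m / 2"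
    and m: "1 \<le> m"
  shows "norm ((1 - t ^ m) / (1 - exp u * t ^ m) - 1) \<le> 4 / a * norm u * exp (- a * m / 2)"
proof -
  have gap: "a / 4 \<le> norm (1 - exp u * t ^ m)"
    using norm_one_minus_exp_mult_power_ge[OF a t u m] .
  have "norm u * exp (norm u) \<le> norm u * exp (a * m / 2)"
    using u by (intro mult_left_mono) auto
  hence "norm (t ^ m * (exp u - 1)) \<le> exp (- a * m) * (norm u * exp (a * m / 2))"
    unfolding norm_mult using norm_power_le_exp_mult[OF t, of m] norm_exp_minus_one_le[of u]
    by (intro mult_mono) auto
  also have "\<dots> = norm u * exp (- a * m / 2)"
    by (simp add: exp_add[symmetric])
  finally have num: "norm (t ^ m * (exp u - 1)) \<le> norm u * exp (- a * m / 2)" .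
  have "1 - exp u * t ^ m \<noteq> 0"
    using gap a by auto
  hence "(1 - t ^ m) / (1 - exp u * t ^ m) - 1 = t ^ m * (exp u - 1) / (1 - exp u * t ^ m)"
    by (simp add: field_simps)
  moreover have "norm (t ^ m * (exp u - 1) / (1 - exp u * t ^ m))
                   \<le> norm u * exp (- a * m / 2) / (a / 4)"
    unfolding norm_divide using num gap a by (intro frac_le) auto
  ultimately show ?thesis
    by (simp add: field_simps)
qed

text \<open>The m-th factor of M_0(t, e^w) / M(t), with e^(s w) in place of q^s.\<close>
definition quotient_factor :: "complex \<Rightarrow> complex \<Rightarrow> nat \<Rightarrow> complex" where
  "quotient_factor t w m =
     (\<Prod>j<m. (1 - t ^ m) / (1 - exp (of_int (2 * int j + 1 - int m) * w) * t ^ m))"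

lemma norm_shift_mult_le:
  assumes "j < m"
  shows "norm (of_int (2 * int j + 1 - int m) * w :: complex) \<le> m * norm w"
proof -
  have "\<bar>2 * int j + 1 - int m\<bar> \<le> int m"
    using assms by arith
  hence "\<bar>real_of_int (2 * int j + 1 - int m)\<bar> \<le> real m"
    by linarith
  hence "\<bar>real_of_int (2 * int j + 1 - int m)\<bar> * norm w \<le> m * norm w"
    by (rule mult_right_mono) simp
  thus ?thesis
    by (simp only: norm_mult norm_of_int)
qed

lemma
  fixes t w :: complex and a :: real
  assumes a: "0 < a" "a \<le> 2" and t: "norm t \<le> exp (- a)" and w: "norm w \<le> a / 2"
    and j: "j < m"
  defines "u \<equiv> of_int (2 * int j + 1 - int m) * w"
  shows quotient_factor_denominator_nonzero: "1 - exp u * t ^ m \<noteq> 0"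
    and norm_quotient_factor_term_minus_one_le:
      "norm ((1 - t ^ m) / (1 - exp u * t ^ m) - 1) \<le> 4 / a * (m * norm w) * exp (- a * m / 2)"
proof -
  have m: "1 \<le> m"
    using j by simp
  have "m * norm w \<le> a * m / 2"
    using mult_left_mono[OF w, of "real m"] by (simp add: algebra_simps)
  hence u: "norm u \<le> a * m / 2"
    using norm_shift_mult_le[OF j, of w] by (simp add: u_def)
  show "1 - exp u * t ^ m \<noteq> 0"
    using norm_one_minus_exp_mult_power_ge[OF a t u m] a by auto
  have "norm ((1 - t ^ m) / (1 - exp u * t ^ m) - 1) \<le> 4 / a * norm u * exp (- a * m / 2)"
    by (rule norm_quotient_minus_one_le[OF a t u m])
  also have "\<dots> \<le> 4 / a * (m * norm w) * exp (- a * m / 2)"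
    using norm_shift_mult_le[OF j, of w] a by (intro mult_right_mono mult_left_mono) (auto simp: u_def)
  finally show "norm ((1 - t ^ m) / (1 - exp u * t ^ m) - 1) \<le> 4 / a * (m * norm w) * exp (- a * m / 2)" .
qed

lemma norm_quotient_factor_minus_one_le:
  fixes t w :: complex and a :: real
  assumes a: "0 < a" "a \<le> 1 / 2" and t: "norm t \<le> exp (- a)"
    and w: "norm w \<le> a ^ 4 / 256" and m: "1 \<le> m"
  shows "norm (quotient_factor t w m - 1) \<le> 2 * a * exp (- a / 4) ^ m"
proof -
  have wa: "norm w \<le> a / 2"
    using w quartic_radius_le[of a] a by linarith
  define b where "b = 4 / a * (m * norm w) * exp (- a * m / 2)"
  have b0: "0 \<le> b"
    using a by (simp add: b_def)
  have "norm (quotient_factor t w m - 1)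
          \<le> exp (\<Sum>j<m. norm ((1 - t ^ m) / (1 - exp (of_int (2 * int j + 1 - int m) * w) * t ^ m) - 1)) - 1"
    unfolding quotient_factor_def by (rule norm_prod_minus_one_le)
  also have "\<dots> \<le> exp (m * b) - 1"
    using sum_bounded_above[of "{..<m}" _ b] norm_quotient_factor_term_minus_one_le[OF _ _ t wa] a
    by (simp add: b_def)
  finally have prod_le: "norm (quotient_factor t w m - 1) \<le> exp (m * b) - 1" .
  have "m * b = 4 / a * norm w * ((real m)\<^sup>2 * exp (- a * m / 2))"
    by (simp add: b_def power2_eq_square)
  also have "\<dots> \<le> 4 / a * (a ^ 4 / 256) * (64 / a\<^sup>2 * exp (- a * m / 4))"
    using a w by (intro mult_mono[OF _ square_mult_exp_le] mult_left_mono) auto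
  also have "\<dots> = a * exp (- a * m / 4)"
    using a by (simp add: field_simps power_numeral_reduce)
  finally have mb: "m * b \<le> a * exp (- a * m / 4)" .
  also have "\<dots> \<le> a"
    using a by (intro mult_left_le) auto
  also have "\<dots> \<le> 1 / 2"
    by (rule a(2))
  finally have "norm (exp (m * b)) \<le> 1 + 2 * (m * b)"
    using exp_bound_lemma[of "m * b"] b0 by simp
  hence "norm (quotient_factor t w m - 1) \<le> 2 * (a * exp (- a * m / 4))"
    using prod_le mb by simp
  also have "exp (- a * m / 4) = exp (- a / 4) ^ m"
    by (simp add: exp_of_nat_mult[symmetric] field_simps)
  finally show ?thesis by simp
qed

lemma
  fixes a :: real
  assumes a: "0 < a" "a \<le> 4"
  shows summable_exp_geometric: "summable (\<lambda>n. 2 * a * exp (- a / 4) ^ Suc n)"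
    and suminf_exp_geometric_le: "(\<Sum>n. 2 * a * exp (- a / 4) ^ Suc n) \<le> 16"
proof -
  define g where "g = exp (- a / 4)"
  have g: "0 < g" "g < 1"
    using a by (auto simp: g_def)
  have "(\<lambda>n. 2 * a * g * g ^ n) sums (2 * a * g * (1 / (1 - g)))"
    using geometric_sums[of g] g by (intro sums_mult) simp
  hence sums: "(\<lambda>n. 2 * a * g ^ Suc n) sums (2 * a * g / (1 - g))"
    by (simp add: mult.assoc)
  thus "summable (\<lambda>n. 2 * a * exp (- a / 4) ^ Suc n)"
    unfolding g_def by (rule sums_summable)
  have "a / 8 \<le> 1 - g"
    using one_minus_exp_neg_ge[of "a / 4"] a by (simp add: g_def)
  moreover have "2 * a * g \<le> 2 * a"
    using a g by simp
  ultimately have "2 * a * g \<le> 16 * (1 - g)"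
    by argo
  hence "2 * a * g / (1 - g) \<le> 16"
    using g by (simp add: pos_divide_le_eq)
  thus "(\<Sum>n. 2 * a * exp (- a / 4) ^ Suc n) \<le> 16"
    using sums_unique[OF sums] unfolding g_def by simp
qed

lemma convergent_prod_MacMahon_factors:
  fixes t :: complex and a :: real
  assumes a: "0 < a" and t: "norm t \<le> exp (- a)"
  shows "convergent_prod (\<lambda>n. inverse ((1 - t ^ Suc n) ^ Suc n))"
proof -
  have "summable (\<lambda>n. norm ((1 - t ^ Suc n) ^ Suc n - 1))"
  proof (rule summable_comparison_test')
    show "summable (\<lambda>n. 2 / a * exp (2 / a) * exp (- a / 2) ^ Suc n)"
      using a by (intro summable_mult summable_ignore_initial_segment[where k = 1, simplified]
          summable_geometric) auto
  next
    fix n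
    define m where "m = Suc n"
    have tm: "norm (t ^ m) \<le> exp (- a * m)"
      using t by (rule norm_power_le_exp_mult)
    define x where "x = m * norm (t ^ m)"
    have x0: "0 \<le> x"
      by (simp add: x_def)
    have "x \<le> m * exp (- a * m)"
      unfolding x_def using tm by (intro mult_left_mono) auto
    also have "\<dots> \<le> 2 / a * exp (- a * m / 2)"
      using linear_mult_exp_le[OF a] .
    finally have "x \<le> 2 / a * exp (- a * m / 2)" .
    moreover have "2 / a * exp (- a * m / 2) \<le> 2 / a"
      using a by (intro mult_left_le) auto
    ultimately have x: "x \<le> 2 / a * exp (- a * m / 2)" "x \<le> 2 / a"
      by linarith+
    have "norm ((1 - t ^ m) ^ m - 1) = norm ((\<Prod>j<m. 1 - t ^ m) - 1)"
      by simp
    also have "\<dots> \<le> exp x - 1"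
      using norm_prod_minus_one_le[of "\<lambda>_. 1 - t ^ m" "{..<m}"] by (simp add: x_def)
    also have "\<dots> \<le> x * exp x"
      by (rule exp_minus_one_le_mult_exp[OF x0])
    also have "\<dots> \<le> 2 / a * exp (- a * m / 2) * exp (2 / a)"
      using x x0 by (intro mult_mono) auto
    also have "exp (- a * m / 2) = exp (- a / 2) ^ m"
      by (simp add: exp_of_nat_mult[symmetric] field_simps)
    finally show "norm (norm ((1 - t ^ Suc n) ^ Suc n - 1))
                    \<le> 2 / a * exp (2 / a) * exp (- a / 2) ^ Suc n"
      by (simp add: m_def algebra_simps)
  qed
  hence "convergent_prod (\<lambda>n. (1 - t ^ Suc n) ^ Suc n)"
    by (intro abs_convergent_prod_imp_convergent_prod summable_imp_abs_convergent_prod)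
  thus ?thesis
    by (simp only: convergent_prod_inverse_iff)
qed

lemma M0_exp_eq_prodinf_quotient_factor:
  fixes t w :: complex
  assumes t: "norm t < 1"
    and quotient: "convergent_prod (\<lambda>n. quotient_factor t w (Suc n))"
    and MacMahon: "convergent_prod (\<lambda>n. inverse ((1 - t ^ Suc n) ^ Suc n))"
  shows "M0 t (exp w) = (\<Prod>n. quotient_factor t w (Suc n)) * MacMahon t"
proof -
  have factor: "(let m = Suc n in \<Prod>j<m. inverse (1 - exp w powi (2 * int j + 1 - int m) * t ^ m))
                  = quotient_factor t w (Suc n) * inverse ((1 - t ^ Suc n) ^ Suc n)" for n
  proof -
    define m where "m = Suc n"
    have "norm (t ^ m) < 1"
      unfolding norm_power m_def using t by (metis power_less_one_iff norm_ge_zero zero_less_Suc)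
    hence "(1 - t ^ m) ^ m \<noteq> 0"
      by auto
    moreover have "quotient_factor t w m
        = (1 - t ^ m) ^ m * (\<Prod>j<m. inverse (1 - exp (of_int (2 * int j + 1 - int m) * w) * t ^ m))"
      by (simp add: quotient_factor_def divide_inverse prod.distrib)
    ultimately show ?thesis
      by (simp add: m_def[symmetric] exp_powi)
  qed
  show ?thesis
    unfolding M0_def MacMahon_def factor prodinf_mult[OF quotient MacMahon] ..
qed

lemma
  fixes t :: complex and a :: real
  assumes a: "0 < a" "a \<le> 1 / 2" and t: "norm t \<le> exp (- a)"
  defines "\<rho> \<equiv> a ^ 4 / 256"
  shows continuous_on_prodinf_quotient_factor:
      "continuous_on (cball 0 \<rho>) (\<lambda>w. \<Prod>n. quotient_factor t w (Suc n))"
    and holomorphic_on_prodinf_quotient_factor: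
      "(\<lambda>w. \<Prod>n. quotient_factor t w (Suc n)) holomorphic_on ball 0 \<rho>"
    and norm_prodinf_quotient_factor_le:
      "\<And>w. w \<in> cball 0 \<rho> \<Longrightarrow> norm (\<Prod>n. quotient_factor t w (Suc n)) \<le> exp 16"
    and convergent_prod_quotient_factor:
      "\<And>w. w \<in> cball 0 \<rho> \<Longrightarrow> convergent_prod (\<lambda>n. quotient_factor t w (Suc n))"
proof -
  define \<gamma> where "\<gamma> = (\<lambda>n. 2 * a * exp (- a / 4) ^ Suc n)"
  have \<gamma>: "summable \<gamma>" "suminf \<gamma> \<le> 16"
    unfolding \<gamma>_def using summable_exp_geometric[of a] suminf_exp_geometric_le[of a] a by auto
  have bound: "norm (quotient_factor t w (Suc n) - 1) \<le> \<gamma> n" if "w \<in> cball 0 \<rho>" for w n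
    using norm_quotient_factor_minus_one_le[OF a t, of w "Suc n"] that by (simp add: \<gamma>_def \<rho>_def)
  have denominator: "1 - exp (of_int (2 * int j + 1 - int (Suc n)) * w) * t ^ Suc n \<noteq> 0"
    if "w \<in> cball 0 \<rho>" "j < Suc n" for w n j
    using quotient_factor_denominator_nonzero[OF _ _ t _ that(2)] quartic_radius_le[of a] that(1) a
    by (simp add: \<rho>_def)
  have continuous_factor: "continuous_on (cball 0 \<rho>) (\<lambda>w. quotient_factor t w (Suc n))" for n
    unfolding quotient_factor_def using denominator
    by (intro continuous_on_prod continuous_intros) auto
  have holomorphic_factor: "(\<lambda>w. quotient_factor t w (Suc n)) holomorphic_on ball 0 \<rho>" for n
    unfolding quotient_factor_def using denominator
    by (intro holomorphic_on_prod holomorphic_intros) auto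
  note factors = continuous_factor holomorphic_factor bound \<gamma>(1)
  show "continuous_on (cball 0 \<rho>) (\<lambda>w. \<Prod>n. quotient_factor t w (Suc n))"
    by (rule continuous_on_prodinf[where f = "\<lambda>n w. quotient_factor t w (Suc n)", OF factors])
  show "(\<lambda>w. \<Prod>n. quotient_factor t w (Suc n)) holomorphic_on ball 0 \<rho>"
    by (rule holomorphic_on_prodinf[where f = "\<lambda>n w. quotient_factor t w (Suc n)", OF factors])
  show "norm (\<Prod>n. quotient_factor t w (Suc n)) \<le> exp 16" if "w \<in> cball 0 \<rho>" for w
    using norm_prodinf_le_exp_suminf[where f = "\<lambda>n w. quotient_factor t w (Suc n)", OF factors that] \<gamma>(2)
    by (meson exp_le_cancel_iff order_trans)
  show "convergent_prod (\<lambda>n. quotient_factor t w (Suc n))" if "w \<in> cball 0 \<rho>" for w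
  proof -
    have "summable (\<lambda>n. norm (quotient_factor t w (Suc n) - 1))"
      by (rule summable_comparison_test'[OF \<gamma>(1)]) (use bound[OF that] in simp)
    thus ?thesis
      by (intro abs_convergent_prod_imp_convergent_prod summable_imp_abs_convergent_prod)
  qed
qed

lemma norm_Fk_le:
  fixes t :: complex and a :: real
  assumes a: "0 < a" "a \<le> 1 / 2" and t: "norm t \<le> exp (- a)"
  shows "norm (Fk k t) \<le> fact k * exp 16 * (256 / a ^ 4) ^ k"
proof -
  define \<rho> where "\<rho> = a ^ 4 / 256"
  define L where "L = (\<lambda>w. \<Prod>n. quotient_factor t w (Suc n))"
  have \<rho>: "0 < \<rho>"
    using a by (simp add: \<rho>_def)
  have L_continuous: "continuous_on (cball 0 \<rho>) L"
    and L_holomorphic: "L holomorphic_on ball 0 \<rho>"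
    and L_bounded: "\<And>w. w \<in> cball 0 \<rho> \<Longrightarrow> norm (L w) \<le> exp 16"
    unfolding L_def \<rho>_def using continuous_on_prodinf_quotient_factor[OF a t]
      holomorphic_on_prodinf_quotient_factor[OF a t] norm_prodinf_quotient_factor_le[OF a t] by auto
  have "norm t < 1"
    using t a by (simp add: order_le_less_trans)
  hence L_M0: "M0 t (exp w) = MacMahon t * L w" if "w \<in> ball 0 \<rho>" for w
    using M0_exp_eq_prodinf_quotient_factor convergent_prod_MacMahon_factors[OF a(1) t]
      convergent_prod_quotient_factor[OF a t, of w] that by (simp add: L_def \<rho>_def mult.commute)
  have "Mk k t = (deriv ^^ k) (\<lambda>w. MacMahon t * L w) 0"
    unfolding Mk_def using L_holomorphic \<rho> L_M0
    by (intro qdq_funpow_at_one) (auto intro!: holomorphic_intros)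
  also have "\<dots> = MacMahon t * (deriv ^^ k) L 0"
    using L_holomorphic \<rho> by (intro higher_deriv_cmult) auto
  finally have "norm (Fk k t) \<le> norm ((deriv ^^ k) L 0)"
    by (cases "MacMahon t = 0") (simp_all add: Fk_def)
  also have "\<dots> \<le> fact k * exp 16 / \<rho> ^ k"
    using L_continuous L_holomorphic L_bounded \<rho> by (intro Cauchy_inequality) (auto simp: dist_norm)
  also have "\<dots> = fact k * exp 16 * (256 / a ^ 4) ^ k"
    by (simp add: \<rho>_def field_simps)
  finally show ?thesis .
qed

theorem lemma4:
  fixes k :: nat
  assumes "k > 0" and "even k"
  shows "\<exists>N0 C A. N0 > 0 \<and> C > 0 \<and> A > 0 \<and>
           (\<forall>N::real. N > N0 \<longrightarrow> (\<forall>z \<in> minor_arc_z N.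
              cmod (Fk k (exp z)) < C * N powr A))"
proof (intro exI conjI allI impI ballI)
  define C :: real where "C = fact k * exp 16 * 256 ^ k + 1"
  show "(2::real) > 0" "C > 0" "real (4 * k) > 0"
    using assms(1) by (simp_all add: C_def add_pos_pos)
  fix N :: real and z
  assume N: "N > 2" and z: "z \<in> minor_arc_z N"
  have "norm (exp z) \<le> exp (- (1 / N))"
    using z by (simp add: minor_arc_z_def)
  hence "norm (Fk k (exp z)) \<le> fact k * exp 16 * (256 / (1 / N) ^ 4) ^ k"
    using N by (intro norm_Fk_le) auto
  also have "256 / (1 / N) ^ 4 = 256 * N ^ 4"
    by (simp add: power_one_over)
  also have "fact k * exp 16 * (256 * N ^ 4) ^ k = fact k * exp 16 * 256 ^ k * N ^ (4 * k)"
    by (simp add: power_mult_distrib power_mult)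
  also have "\<dots> < C * N ^ (4 * k)"
    using N by (simp add: C_def)
  also have "N ^ (4 * k) = N powr real (4 * k)"
    using N by (intro powr_realpow[symmetric]) auto
  finally show "norm (Fk k (exp z)) < C * N powr real (4 * k)" .
qed

end
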